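(* Let $k\ge 2$ and $C_{8k}=v_0v_1\cdots v_{8k-1}v_0$. Let $\mathscr A=\{\{v_{2i},v_{4k+2i}\}: 0\le i\le 2k-1\}$ and $\mathscr B=\{\{v_{2j+1},v_{2k+2j+1}\}: j\in[0,k-1]\cup[2k,3k-1]\}$. Let $G_{4k}(\mathscr A,\mathscr B)$ be the graph obtained from $C_{8k}$ by identifying the two vertices of each block of $\mathscr A\cup\mathscr B$ into a single vertex. Then $G_{4k}(\mathscr A,\mathscr B)\cong C_{4k}(1,2k-1)$.
   Context: Identifying a set of pairwise nonadjacent vertices means replacing them by one new vertex incident to all edges previously incident to any of them. For an integer $n\ge 3$ and integers $s_1,\dots,s_k$, the circulant graph $C_n(s_1,\dots,s_k)$ has vertex set $\mathbb Z_n$, with distinct $u,v$ adjacent iff $u-v\equiv\pm s_i\pmod n$ for some $i$. $[a,b]$ denotes the set of integers from $a$ to $b$. *)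

theory Defs
  imports Main "HOL-Library.Multiset"
begin

text \<open>Graphs (possibly with multiple edges) are represented as a pair of a
vertex set and a multiset of edges, each edge being the set of its end vertices.\<close>

type_synonym 'a mgraph = "'a set \<times> 'a set multiset"

definition cycle_graph :: "nat \<Rightarrow> nat mgraph" where
  "cycle_graph n = ({0..<n}, image_mset (\<lambda>i. {i, (i + 1) mod n}) (mset_set {0..<n}))"

definition circulant :: "nat \<Rightarrow> int set \<Rightarrow> nat mgraph" where
  "circulant n S = ({0..<n}, mset_set {{u, v} | u v. u < n \<and> v < n \<and> u \<noteq> v \<and>
      (\<exists>s\<in>S. (int u - int v) mod int n = s mod int n \<or> (int u - int v) mod int n = (- s) mod int n)})"

definition identify_map :: "'a set set \<Rightarrow> 'a \<Rightarrow> 'a set" where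
  "identify_map P x = (if \<exists>B\<in>P. x \<in> B then (THE B. B \<in> P \<and> x \<in> B) else {x})"

definition identify :: "'a mgraph \<Rightarrow> 'a set set \<Rightarrow> 'a set mgraph" where
  "identify G P = (identify_map P ` fst G, image_mset (image (identify_map P)) (snd G))"

definition mgraph_iso :: "'a mgraph \<Rightarrow> 'b mgraph \<Rightarrow> bool" where
  "mgraph_iso G H = (\<exists>f. bij_betw f (fst G) (fst H) \<and> image_mset (image f) (snd G) = snd H)"

end

(* Label the vertex v_m of C_8k by (m + s_m) mod 4k, where s_m = 2k for odd m in [2k, 6k) and
   s_m = 0 otherwise. The blocks of A and B are exactly the fibres of this labelling, so identifying
   them amounts to relabelling C_8k. The edge v_m v_(m+1) becomes a circulant edge of step 1 if
   m < 2k or m >= 6k, and of step 2k - 1 otherwise, because then s_m + s_(m+1) = 2k. Every edge of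
   C_4k(1, 2k - 1) is hit, and for k >= 2 the circulant has 8k distinct edges, as many as C_8k, so
   each is hit exactly once. *)

theory Submission
  imports Defs
begin

lemma mgraph_iso_identify_blocks:
  fixes G :: "'a mgraph" and g :: "'a \<Rightarrow> 'b"
  assumes cover: "\<forall>x\<in>fst G. \<exists>B\<in>P. x \<in> B"
    and fibres: "\<forall>B\<in>P. \<forall>B'\<in>P. \<forall>x\<in>B. \<forall>y\<in>B'. g x = g y \<longleftrightarrow> B = B'"
    and edges: "\<forall>e\<in>#snd G. e \<subseteq> fst G"
  shows "mgraph_iso (identify G P) (g ` fst G, image_mset (image g) (snd G))"
proof -
  define f where "f B = g (SOME x. x \<in> B)" for B
  have block: "identify_map P x \<in> P \<and> x \<in> identify_map P x" if x: "x \<in> fst G" for x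
  proof -
    obtain B where B: "B \<in> P" "x \<in> B"
      using cover x by blast
    have "(THE B. B \<in> P \<and> x \<in> B) = B"
      using B fibres by (intro the_equality) blast+
    then show ?thesis
      using B by (auto simp: identify_map_def)
  qed
  have f_block: "f (identify_map P x) = g x" if "x \<in> fst G" for x
  proof -
    have "(SOME y. y \<in> identify_map P x) \<in> identify_map P x"
      using block[OF that] by (intro someI) (rule conjunct2)
    then show ?thesis
      unfolding f_def using block[OF that] fibres by blast
  qed
  have "inj_on f (identify_map P ` fst G)"
  proof (rule inj_onI)
    fix B B'
    assume "B \<in> identify_map P ` fst G" "B' \<in> identify_map P ` fst G" "f B = f B'"
    then obtain x y where x: "x \<in> fst G" "B = identify_map P x"
      and y: "y \<in> fst G" "B' = identify_map P y" and "g x = g y"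
      using f_block by auto
    then show "B = B'"
      using block[OF x(1)] block[OF y(1)] fibres by blast
  qed
  moreover have "f ` identify_map P ` fst G = g ` fst G"
    unfolding image_image using f_block by (intro image_cong) simp_all
  moreover have "image_mset (image f \<circ> image (identify_map P)) (snd G)
      = image_mset (image g) (snd G)"
  proof (rule image_mset_cong)
    fix e assume "e \<in># snd G"
    then show "(image f \<circ> image (identify_map P)) e = g ` e"
      unfolding comp_def image_image using edges f_block by (intro image_cong) auto
  qed
  ultimately show ?thesis
    unfolding mgraph_iso_def identify_def fst_conv snd_conv multiset.map_comp bij_betw_def by blast
qed

definition circulant_edge :: "nat \<Rightarrow> nat \<Rightarrow> nat \<Rightarrow> nat set" where
  "circulant_edge n u s = {u, (u + s) mod n}"

lemma circulant_step_iff: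
  fixes n u v s :: nat
  assumes "u < n"
  shows "(int u - int v) mod int n = int s mod int n \<longleftrightarrow> u = (v + s) mod n"
proof -
  have "u = (v + s) mod n \<longleftrightarrow> int u mod int n = (int v + int s) mod int n"
    using assms by (metis mod_less of_nat_add of_nat_eq_iff zmod_int)
  also have "\<dots> \<longleftrightarrow> (int u - int v) mod int n = int s mod int n"
    by (simp add: mod_eq_dvd_iff algebra_simps)
  finally show ?thesis ..
qed

lemma circulant_neg_step_iff:
  fixes n u v s :: nat
  assumes "v < n"
  shows "(int u - int v) mod int n = (- int s) mod int n \<longleftrightarrow> v = (u + s) mod n"
proof -
  have "(int u - int v) mod int n = (- int s) mod int n
      \<longleftrightarrow> (int v - int u) mod int n = int s mod int n"
    by (simp add: mod_eq_dvd_iff algebra_simps dvd_diff_commute)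
  then show ?thesis
    using circulant_step_iff[OF assms] by simp
qed

lemma circulant_step_neq:
  fixes n u s :: nat
  assumes "u < n" "0 < s" "s < n"
  shows "(u + s) mod n \<noteq> u"
  using circulant_step_iff[OF assms(1), of u s] assms(2,3) by auto

lemma inj_on_circulant_edge:
  assumes steps: "\<forall>s\<in>T. 0 < s \<and> s < n"
    and not_opposite: "\<forall>s\<in>T. \<forall>s'\<in>T. s + s' \<noteq> n"
  shows "inj_on (case_prod (circulant_edge n)) ({..<n} \<times> T)"
proof (rule inj_onI, clarsimp)
  fix u s u' s'
  assume u: "u < n" "u' < n" and s: "s \<in> T" "s' \<in> T"
    and eq: "circulant_edge n u s = circulant_edge n u' s'"
  show "u = u' \<and> s = s'"
  proof (cases "u = u'")
    case True
    then have "(u + s) mod n = (u + s') mod n"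
      using eq circulant_step_neq u s steps unfolding circulant_edge_def doubleton_eq_iff by metis
    then have "int s mod int n = int s' mod int n"
      using circulant_step_iff[of "(u + s) mod n" n u s] circulant_step_iff[of "(u + s) mod n" n u s']
        u(1) by simp
    then show ?thesis using True s steps by simp
  next
    case False
    then have "u = (u' + s') mod n" "u' = (u + s) mod n"
      using eq unfolding circulant_edge_def doubleton_eq_iff by auto
    then have "(int u - int u') mod int n = int s' mod int n"
      "(int u' - int u) mod int n = int s mod int n"
      using circulant_step_iff u by auto
    then have "(int s + int s') mod int n = ((int u' - int u) + (int u - int u')) mod int n"
      by (metis mod_add_eq)
    then have "(int s + int s') mod int n = 0"
      by simp
    then have "n dvd s + s'"
      by (metis int_dvd_int_iff mod_0_imp_dvd of_nat_add)
    moreover have "0 < s + s'" "s + s' < 2 * n"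
      using bspec[OF steps s(1)] bspec[OF steps s(2)] by linarith+
    ultimately have "s + s' = n"
      by (elim dvdE) (auto simp: less_Suc_eq)
    then show ?thesis using s not_opposite by blast
  qed
qed

lemma circulant_nat_steps:
  assumes steps: "\<forall>s\<in>T. 0 < s \<and> s < n"
  shows "circulant n (int ` T)
    = ({0..<n}, mset_set (case_prod (circulant_edge n) ` ({..<n} \<times> T)))"
proof -
  have "{{u, v} | u v. u < n \<and> v < n \<and> u \<noteq> v \<and> (\<exists>s\<in>int ` T.
      (int u - int v) mod int n = s mod int n \<or> (int u - int v) mod int n = (- s) mod int n)}
    = case_prod (circulant_edge n) ` ({..<n} \<times> T)" (is "?E = ?F")
  proof
    show "?E \<subseteq> ?F"
    proof clarify
      fix u v s
      assume uv: "u < n" "v < n" and s: "s \<in> T"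
        and "(int u - int v) mod int n = int s mod int n
          \<or> (int u - int v) mod int n = (- int s) mod int n"
      then have "u = (v + s) mod n \<or> v = (u + s) mod n"
        using circulant_step_iff circulant_neg_step_iff by blast
      then show "{u, v} \<in> ?F"
      proof
        assume "u = (v + s) mod n"
        then have "{u, v} = circulant_edge n v s"
          by (auto simp: circulant_edge_def)
        then show ?thesis using uv s by auto
      next
        assume "v = (u + s) mod n"
        then have "{u, v} = circulant_edge n u s"
          by (auto simp: circulant_edge_def)
        then show ?thesis using uv s by auto
      qed
    qed
    have "circulant_edge n u s \<in> ?E" if u: "u < n" and s: "s \<in> T" for u s
    proof -
      have "(u + s) mod n < n" "(u + s) mod n \<noteq> u"
        using u s steps circulant_step_neq by auto
      moreover have "(int u - int ((u + s) mod n)) mod int n = (- int s) mod int n"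
        using circulant_neg_step_iff calculation(1) by blast
      ultimately show "circulant_edge n u s \<in> ?E"
        unfolding circulant_edge_def using u s
        by (intro CollectI exI[of _ u] exI[of _ "(u + s) mod n"]) force
    qed
    then show "?F \<subseteq> ?E"
      by auto
  qed
  then show ?thesis
    by (simp add: circulant_def)
qed

definition vertex_shift :: "nat \<Rightarrow> nat \<Rightarrow> nat" where
  "vertex_shift k m = (if odd m \<and> 2 * k \<le> m \<and> m < 6 * k then 2 * k else 0)"

definition vertex_label :: "nat \<Rightarrow> nat \<Rightarrow> nat" where
  "vertex_label k m = (m + vertex_shift k m) mod (4 * k)"

lemma vertex_label_eq:
  assumes "m < 8 * k"
  shows "vertex_label k m =
    (if even m then (if m < 4 * k then m else m - 4 * k)
     else if m < 2 * k then m else if m < 6 * k then m - 2 * k else m - 4 * k)"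
proof -
  have mod_once: "a mod (4 * k) = a - 4 * k" if "4 * k \<le> a" "a < 8 * k" for a
    using that by (simp add: le_mod_geq)
  show ?thesis
    using assms mod_once[of m] mod_once[of "m + 2 * k"]
    by (auto simp: vertex_label_def vertex_shift_def)
qed

lemma vertex_label_lt:
  assumes "0 < k"
  shows "vertex_label k m < 4 * k"
  using assms by (simp add: vertex_label_def)

lemma vertex_label_step_one:
  assumes "m < 8 * k" "m < 2 * k \<or> 6 * k \<le> m"
  shows "vertex_label k ((m + 1) mod (8 * k)) = (vertex_label k m + 1) mod (4 * k)"
proof -
  have "vertex_shift k m = 0" "vertex_shift k ((m + 1) mod (8 * k)) = 0"
    using assms by (auto simp: vertex_shift_def mod_if)
  moreover have "(m + 1) mod (8 * k) mod (4 * k) = (m + 1) mod (4 * k)"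
    by (simp add: mod_mod_cancel)
  ultimately show ?thesis
    by (simp add: vertex_label_def mod_Suc_eq)
qed

lemma vertex_label_step_long:
  assumes "2 * k \<le> m" "m < 6 * k"
  shows "vertex_label k m = (vertex_label k (m + 1) + (2 * k - 1)) mod (4 * k)"
proof -
  have "(vertex_label k (m + 1) + (2 * k - 1)) mod (4 * k)
      = (m + 1 + vertex_shift k (m + 1) + (2 * k - 1)) mod (4 * k)"
    unfolding vertex_label_def by (rule mod_add_left_eq)
  also have "\<dots> = (m + vertex_shift k (m + 1) + 2 * k) mod (4 * k)"
    using assms by (simp add: algebra_simps)
  also have "\<dots> = (m + vertex_shift k m) mod (4 * k)"
  proof (cases "odd m")
    case True
    then show ?thesis using assms by (simp add: vertex_shift_def)
  next
    case False
    then have "vertex_shift k (m + 1) = 2 * k" "vertex_shift k m = 0"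
      using assms by (auto simp: vertex_shift_def)
    then show ?thesis by simp
  qed
  finally show ?thesis
    by (simp add: vertex_label_def)
qed

definition blocks :: "nat \<Rightarrow> nat set set" where
  "blocks k = {{2 * i, 4 * k + 2 * i} | i. i \<le> 2 * k - 1} \<union>
     {{2 * j + 1, 2 * k + 2 * j + 1} | j. j \<le> k - 1 \<or> (2 * k \<le> j \<and> j \<le> 3 * k - 1)}"

definition label_block :: "nat \<Rightarrow> nat \<Rightarrow> nat set" where
  "label_block k w = (if even w then {w, w + 4 * k}
     else if w < 2 * k then {w, w + 2 * k} else {w + 2 * k, w + 4 * k})"

lemma vertex_label_block:
  assumes "w < 4 * k" "x \<in> label_block k w"
  shows "vertex_label k x = w"
  using assms by (auto simp: label_block_def vertex_label_eq split: if_splits)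

lemma in_label_block:
  assumes "m < 8 * k"
  shows "m \<in> label_block k (vertex_label k m)"
  using assms by (auto simp: label_block_def vertex_label_eq)

lemma blocks_eq:
  assumes "0 < k"
  shows "blocks k = label_block k ` {..<4 * k}"
proof
  show "blocks k \<subseteq> label_block k ` {..<4 * k}"
  proof
    fix B assume "B \<in> blocks k"
    then consider (even) i where "i \<le> 2 * k - 1" "B = {2 * i, 4 * k + 2 * i}"
      | (odd_low) j where "j \<le> k - 1" "B = {2 * j + 1, 2 * k + 2 * j + 1}"
      | (odd_high) j where "2 * k \<le> j" "j \<le> 3 * k - 1" "B = {2 * j + 1, 2 * k + 2 * j + 1}"
      unfolding blocks_def by blast
    then show "B \<in> label_block k ` {..<4 * k}"
    proof cases
      case even
      then show ?thesis
        using assms by (intro rev_image_eqI[of "2 * i"]) (auto simp: label_block_def)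
    next
      case odd_low
      then show ?thesis
        using assms by (intro rev_image_eqI[of "2 * j + 1"]) (auto simp: label_block_def)
    next
      case odd_high
      then show ?thesis
        using assms by (intro rev_image_eqI[of "2 * j + 1 - 2 * k"]) (auto simp: label_block_def)
    qed
  qed
  show "label_block k ` {..<4 * k} \<subseteq> blocks k"
  proof
    fix B assume "B \<in> label_block k ` {..<4 * k}"
    then obtain w where w: "w < 4 * k" "B = label_block k w"
      by blast
    show "B \<in> blocks k"
    proof (cases "even w")
      case True
      then obtain i where "w = 2 * i"
        by blast
      then show ?thesis
        using w True unfolding blocks_def label_block_def by (auto simp: add.commute)
    next
      case odd_w: False
      then obtain q where q: "w = 2 * q + 1"
        using oddE by blast
      show ?thesis
      proof (cases "w < 2 * k")
        case True
        then have "B = {2 * q + 1, 2 * k + 2 * q + 1}" "q \<le> k - 1"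
          using w q odd_w by (auto simp: label_block_def)
        then show ?thesis
          unfolding blocks_def by blast
      next
        case False
        then have "B = {2 * (q + k) + 1, 2 * k + 2 * (q + k) + 1}"
          "2 * k \<le> q + k" "q + k \<le> 3 * k - 1"
          using w q odd_w by (auto simp: label_block_def)
        then show ?thesis
          unfolding blocks_def by blast
      qed
    qed
  qed
qed

lemma blocks_cover:
  assumes "0 < k" "m < 8 * k"
  shows "\<exists>B\<in>blocks k. m \<in> B"
  using assms in_label_block[of m k] vertex_label_lt[of k m] by (auto simp: blocks_eq)

lemma blocks_label_iff:
  assumes "0 < k" "B \<in> blocks k" "B' \<in> blocks k" "x \<in> B" "y \<in> B'"
  shows "vertex_label k x = vertex_label k y \<longleftrightarrow> B = B'"
proof -
  obtain w w' where "w < 4 * k" "B = label_block k w" "w' < 4 * k" "B' = label_block k w'"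
    using assms(1-3) by (auto simp: blocks_eq)
  then show ?thesis
    using vertex_label_block assms(4,5) by metis
qed

lemma vertex_label_image:
  assumes "0 < k"
  shows "vertex_label k ` {0..<8 * k} = {0..<4 * k}"
proof
  show "vertex_label k ` {0..<8 * k} \<subseteq> {0..<4 * k}"
    using vertex_label_lt[OF assms] by auto
  show "{0..<4 * k} \<subseteq> vertex_label k ` {0..<8 * k}"
  proof
    fix u assume "u \<in> {0..<4 * k}"
    then have "vertex_label k (if u < 2 * k then u else u + 4 * k) = u"
      by (simp add: vertex_label_eq)
    then show "u \<in> vertex_label k ` {0..<8 * k}"
      using \<open>u \<in> {0..<4 * k}\<close>
      by (intro rev_image_eqI[of "if u < 2 * k then u else u + 4 * k"]) auto
  qed
qed

lemma vertex_label_cycle_edge: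
  assumes "m < 8 * k"
  shows "vertex_label k ` {m, (m + 1) mod (8 * k)} =
    (if m < 2 * k \<or> 6 * k \<le> m then circulant_edge (4 * k) (vertex_label k m) 1
     else circulant_edge (4 * k) (vertex_label k (m + 1)) (2 * k - 1))"
proof (cases "m < 2 * k \<or> 6 * k \<le> m")
  case True
  then show ?thesis
    using assms vertex_label_step_one by (simp add: circulant_edge_def)
next
  case False
  then have "(m + 1) mod (8 * k) = m + 1"
    by simp
  then show ?thesis
    using False vertex_label_step_long[of k m] by (auto simp: circulant_edge_def)
qed

lemma circulant_edge_in_cycle_edge_image:
  assumes "u < 4 * k" "s \<in> {1, 2 * k - 1}"
  shows "circulant_edge (4 * k) u s
    \<in> (\<lambda>m. vertex_label k ` {m, (m + 1) mod (8 * k)}) ` {0..<8 * k}"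
  using assms(2)
proof
  assume "s = 1"
  define m where "m = (if u < 2 * k then u else u + 4 * k)"
  have "m < 8 * k" "m < 2 * k \<or> 6 * k \<le> m" "vertex_label k m = u"
    using assms(1) by (auto simp: m_def vertex_label_eq)
  then show ?thesis
    using \<open>s = 1\<close> vertex_label_cycle_edge[of m k] by (intro rev_image_eqI[of m]) auto
next
  assume "s \<in> {2 * k - 1}"
  define m where "m = (if odd u then u + 2 * k else if u \<le> 2 * k then u + 4 * k else u) - 1"
  have "2 * k \<le> m" "m < 6 * k" "vertex_label k (m + 1) = u"
    using assms(1) odd_pos[of u] by (auto simp: m_def vertex_label_eq)
  then show ?thesis
    using \<open>s \<in> {2 * k - 1}\<close> vertex_label_cycle_edge[of m k] by (intro rev_image_eqI[of m]) auto
qed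

lemma vertex_label_cycle_edges:
  assumes "2 \<le> k"
  shows "image_mset (\<lambda>m. vertex_label k ` {m, (m + 1) mod (8 * k)}) (mset_set {0..<8 * k})
    = mset_set (case_prod (circulant_edge (4 * k)) ` ({..<4 * k} \<times> {1, 2 * k - 1}))"
    (is "image_mset ?h _ = mset_set ?E")
proof -
  have steps: "\<forall>s\<in>{1, 2 * k - 1}. 0 < s \<and> s < 4 * k"
    and not_opposite: "\<forall>s\<in>{1, 2 * k - 1}. \<forall>s'\<in>{1, 2 * k - 1}. s + s' \<noteq> 4 * k"
    using assms by auto
  have "?h m \<in> ?E" if "m < 8 * k" for m
    using that assms vertex_label_cycle_edge[OF that] vertex_label_lt[of k] by auto
  then have image: "?h ` {0..<8 * k} = ?E"
    using circulant_edge_in_cycle_edge_image by fastforce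
  have "card ?E = 8 * k"
    using card_image[OF inj_on_circulant_edge[OF steps not_opposite]] assms
    by (simp add: card_cartesian_product)
  then have "inj_on ?h {0..<8 * k}"
    using image by (intro eq_card_imp_inj_on) auto
  then show ?thesis
    using image by (simp add: image_mset_mset_set)
qed

theorem mainTheorem11:
  fixes k :: nat
  assumes "k \<ge> 2"
  shows "mgraph_iso
     (identify (cycle_graph (8 * k))
        ({{2 * i, 4 * k + 2 * i} | i. i \<le> 2 * k - 1} \<union>
         {{2 * j + 1, 2 * k + 2 * j + 1} | j. j \<le> k - 1 \<or> (2 * k \<le> j \<and> j \<le> 3 * k - 1)}))
     (circulant (4 * k) {1, 2 * int k - 1})"
proof -
  have k: "0 < k"
    using assms by simp
  have iso: "mgraph_iso (identify (cycle_graph (8 * k)) (blocks k))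
      (vertex_label k ` {0..<8 * k}, image_mset (image (vertex_label k)) (snd (cycle_graph (8 * k))))"
    using mgraph_iso_identify_blocks[of "cycle_graph (8 * k)" "blocks k" "vertex_label k"]
      blocks_cover[OF k] blocks_label_iff[OF k] by (auto simp: cycle_graph_def)
  have edges: "image_mset (image (vertex_label k)) (snd (cycle_graph (8 * k)))
      = image_mset (\<lambda>m. vertex_label k ` {m, (m + 1) mod (8 * k)}) (mset_set {0..<8 * k})"
    by (simp add: cycle_graph_def multiset.map_comp comp_def)
  have circulant: "circulant (4 * k) {1, 2 * int k - 1} =
      ({0..<4 * k}, mset_set (case_prod (circulant_edge (4 * k)) ` ({..<4 * k} \<times> {1, 2 * k - 1})))"
    using circulant_nat_steps[of "{1, 2 * k - 1}" "4 * k"] assms by (simp add: of_nat_diff)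
  show ?thesis
    using iso
    unfolding blocks_def edges vertex_label_cycle_edges[OF assms] vertex_label_image[OF k] circulant .
qed

end
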